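(* Let $\mathcal{O}$ be a small category. If $\sigma\colon\Delta[0]\to N\mathcal{O}$ picks out the object $\sigma_0$, then $\iota_0\colon\mathcal{O}(-,\sigma_0)\times\Delta[0]\to F\sigma$ is an isomorphism. If $n>0$ and $\sigma\colon\Delta[n]\to N\mathcal{O}$ corresponds to $\sigma_0\xrightarrow{g_1}\sigma_1\to\cdots\xrightarrow{g_n}\sigma_n$, then the square $$\begin{array}{ccc}\mathcal{O}(-,\sigma_0)\times\Delta[n-1] & \xrightarrow{\iota_{n-1}\circ (g_{1*}\times 1)} & F(\sigma\delta_0)\\ \downarrow{\scriptstyle 1\times\delta_0} & & \downarrow\\ \mathcal{O}(-,\sigma_0)\times\Delta[n] & \xrightarrow{\iota_n} & F\sigma\end{array}$$ is a pushout of contravariant functors $\mathcal{O}\to\mathcal{S}$, where $\delta_0\colon\Delta[n-1]\to\Delta[n]$ is the inclusion of the face opposite $0$, $g_{1*}\colon\mathcal{O}(-,\sigma_0)\to\mathcal{O}(-,\sigma_1)$ is postcomposition with $g_1$, $\iota_{n-1}$ is the map $\mathcal{O}(-,\sigma_1)\times\Delta[n-1]\to F(\sigma\delta_0)$ for the simplex $\sigma\delta_0$ (whose initial vertex is $\sigma_1$), and the right vertical map is induced by $\delta_0$.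
   Context: $\mathcal{S}$ is the category of simplicial sets, $N$ the nerve, $\Delta[n]$ the standard $n$-simplex, $\mathcal{O}(-,c)$ the representable contravariant set-valued functor. For $\phi\colon X\to N\mathcal{O}$, $F\phi$ is the contravariant functor $\mathcal{O}\to\mathcal{S}$ with $(F\phi)(b)$ the pullback of $X\xrightarrow{\phi}N\mathcal{O}\leftarrow N(b{\downarrow}\mathcal{O})$, functorial in $b$ via precomposition. A $k$-simplex of $(F\sigma)(b)$ for $\sigma\colon\Delta[n]\to N\mathcal{O}$ is a pair $(\alpha,\omega)$ with $\alpha\colon[k]\to[n]$ order-preserving and $\omega=(b\to\sigma\alpha(0)\to\cdots\to\sigma\alpha(k))$ with maps after the first given by $\sigma\alpha(i-1\to i)$. For such $\sigma$ with initial vertex $\sigma_0$, $\iota_n\colon\mathcal{O}(-,\sigma_0)\times\Delta[n]\to F\sigma$ sends $(g,\alpha)\in\mathcal{O}(b,\sigma_0)\times\Delta[n]_k$ to $(\alpha,\omega)$ with $\omega=(b\xrightarrow{\sigma(0\to\alpha(0))\circ g}\sigma\alpha(0)\to\cdots\to\sigma\alpha(k))$. *)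

theory Defs
  imports Main
begin

record ('o, 'm) cat =
  Ob   :: "'o set"
  Ar   :: "'m set"
  Dom  :: "'m \<Rightarrow> 'o"
  Cod  :: "'m \<Rightarrow> 'o"
  Id   :: "'o \<Rightarrow> 'm"
  Comp :: "'m \<Rightarrow> 'm \<Rightarrow> 'm"   (* Comp g f = g o f, defined when Cod f = Dom g *)

definition Hom :: "('o, 'm) cat \<Rightarrow> 'o \<Rightarrow> 'o \<Rightarrow> 'm set" where
  "Hom C a b = {f \<in> Ar C. Dom C f = a \<and> Cod C f = b}"

definition small_category :: "('o, 'm) cat \<Rightarrow> bool" where
  "small_category C \<longleftrightarrow>
     (\<forall>f \<in> Ar C. Dom C f \<in> Ob C \<and> Cod C f \<in> Ob C) \<and>
     (\<forall>a \<in> Ob C. Id C a \<in> Hom C a a) \<and>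
     (\<forall>f \<in> Ar C. \<forall>g \<in> Ar C. Cod C f = Dom C g \<longrightarrow> Comp C g f \<in> Hom C (Dom C f) (Cod C g)) \<and>
     (\<forall>f \<in> Ar C. Comp C f (Id C (Dom C f)) = f \<and> Comp C (Id C (Cod C f)) f = f) \<and>
     (\<forall>f \<in> Ar C. \<forall>g \<in> Ar C. \<forall>h \<in> Ar C. Cod C f = Dom C g \<longrightarrow> Cod C g = Dom C h \<longrightarrow>
         Comp C h (Comp C g f) = Comp C (Comp C h g) f)"

text \<open>Order-preserving maps [k] -> [l], represented extensionally (value 0 outside {0..k}).\<close>
definition Delta :: "nat \<Rightarrow> nat \<Rightarrow> (nat \<Rightarrow> nat) set" where
  "Delta k l = {\<alpha>. (\<forall>i \<le> k. \<alpha> i \<le> l) \<and> (\<forall>i j. i \<le> j \<longrightarrow> j \<le> k \<longrightarrow> \<alpha> i \<le> \<alpha> j)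
                  \<and> (\<forall>i. k < i \<longrightarrow> \<alpha> i = 0)}"

definition dcomp :: "nat \<Rightarrow> (nat \<Rightarrow> nat) \<Rightarrow> (nat \<Rightarrow> nat) \<Rightarrow> (nat \<Rightarrow> nat)" where
  "dcomp k' \<alpha> \<beta> = (\<lambda>i. if i \<le> k' then \<alpha> (\<beta> i) else 0)"

definition did :: "nat \<Rightarrow> (nat \<Rightarrow> nat)" where
  "did k = (\<lambda>i. if i \<le> k then i else 0)"

text \<open>The coface delta_0 : [m] -> [m+1] omitting 0, precomposed: delta_0 o alpha for alpha : [k] -> [m].\<close>
definition delta0_comp :: "nat \<Rightarrow> (nat \<Rightarrow> nat) \<Rightarrow> (nat \<Rightarrow> nat)" where
  "delta0_comp k \<alpha> = (\<lambda>i. if i \<le> k then Suc (\<alpha> i) else 0)"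

section \<open>Contravariant functors O -> sSet (i.e. functors O^op x Delta^op -> Set)\<close>

text \<open>PAct f k k' beta x: for f : b' -> b and beta : [k'] -> [k], the action
  sending a k-simplex x of P(b) to a k'-simplex of P(b').\<close>
record ('o, 'm, 'x) psh =
  PSets :: "'o \<Rightarrow> nat \<Rightarrow> 'x set"
  PAct  :: "'m \<Rightarrow> nat \<Rightarrow> nat \<Rightarrow> (nat \<Rightarrow> nat) \<Rightarrow> 'x \<Rightarrow> 'x"

definition is_presheaf :: "('o, 'm) cat \<Rightarrow> ('o, 'm, 'x) psh \<Rightarrow> bool" where
  "is_presheaf C P \<longleftrightarrow>
     (\<forall>b \<in> Ob C. \<forall>b' \<in> Ob C. \<forall>f \<in> Hom C b' b. \<forall>k k'. \<forall>\<beta> \<in> Delta k' k. \<forall>x \<in> PSets P b k.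
         PAct P f k k' \<beta> x \<in> PSets P b' k') \<and>
     (\<forall>b \<in> Ob C. \<forall>k. \<forall>x \<in> PSets P b k. PAct P (Id C b) k k (did k) x = x) \<and>
     (\<forall>b \<in> Ob C. \<forall>b' \<in> Ob C. \<forall>b'' \<in> Ob C. \<forall>f \<in> Hom C b' b. \<forall>f' \<in> Hom C b'' b'.
       \<forall>k k' k''. \<forall>\<beta> \<in> Delta k' k. \<forall>\<beta>' \<in> Delta k'' k'. \<forall>x \<in> PSets P b k.
         PAct P f' k' k'' \<beta>' (PAct P f k k' \<beta> x) = PAct P (Comp C f f') k k'' (dcomp k'' \<beta> \<beta>') x)"

definition nat_trans ::
  "('o, 'm) cat \<Rightarrow> ('o, 'm, 'x) psh \<Rightarrow> ('o, 'm, 'y) psh \<Rightarrow> ('o \<Rightarrow> nat \<Rightarrow> 'x \<Rightarrow> 'y) \<Rightarrow> bool" where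
  "nat_trans C P Q \<eta> \<longleftrightarrow>
     (\<forall>b \<in> Ob C. \<forall>k. \<forall>x \<in> PSets P b k. \<eta> b k x \<in> PSets Q b k) \<and>
     (\<forall>b \<in> Ob C. \<forall>b' \<in> Ob C. \<forall>f \<in> Hom C b' b. \<forall>k k'. \<forall>\<beta> \<in> Delta k' k. \<forall>x \<in> PSets P b k.
         \<eta> b' k' (PAct P f k k' \<beta> x) = PAct Q f k k' \<beta> (\<eta> b k x))"

definition nat_iso ::
  "('o, 'm) cat \<Rightarrow> ('o, 'm, 'x) psh \<Rightarrow> ('o, 'm, 'y) psh \<Rightarrow> ('o \<Rightarrow> nat \<Rightarrow> 'x \<Rightarrow> 'y) \<Rightarrow> bool" where
  "nat_iso C P Q \<eta> \<longleftrightarrow> is_presheaf C P \<and> is_presheaf C Q \<and> nat_trans C P Q \<eta> \<and>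
     (\<exists>\<theta>. nat_trans C Q P \<theta> \<and>
        (\<forall>b \<in> Ob C. \<forall>k. \<forall>x \<in> PSets P b k. \<theta> b k (\<eta> b k x) = x) \<and>
        (\<forall>b \<in> Ob C. \<forall>k. \<forall>y \<in> PSets Q b k. \<eta> b k (\<theta> b k y) = y))"

text \<open>Pushout square  A --tp--> B, A --lf--> Cc, B --rt--> D, Cc --bt--> D
  in the category of contravariant functors O -> sSet; the universal property is tested
  against presheaves with elements of an arbitrary type 'z.\<close>
definition is_pushout ::
  "'z itself \<Rightarrow> ('o, 'm) cat \<Rightarrow> ('o, 'm, 'a) psh \<Rightarrow> ('o, 'm, 'b) psh \<Rightarrow> ('o, 'm, 'c) psh \<Rightarrow>
   ('o, 'm, 'd) psh \<Rightarrow> ('o \<Rightarrow> nat \<Rightarrow> 'a \<Rightarrow> 'b) \<Rightarrow> ('o \<Rightarrow> nat \<Rightarrow> 'a \<Rightarrow> 'c) \<Rightarrow>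
   ('o \<Rightarrow> nat \<Rightarrow> 'b \<Rightarrow> 'd) \<Rightarrow> ('o \<Rightarrow> nat \<Rightarrow> 'c \<Rightarrow> 'd) \<Rightarrow> bool" where
  "is_pushout _ C A B Cc D tp lf rt bt \<longleftrightarrow>
     is_presheaf C A \<and> is_presheaf C B \<and> is_presheaf C Cc \<and> is_presheaf C D \<and>
     nat_trans C A B tp \<and> nat_trans C A Cc lf \<and> nat_trans C B D rt \<and> nat_trans C Cc D bt \<and>
     (\<forall>b \<in> Ob C. \<forall>k. \<forall>x \<in> PSets A b k. rt b k (tp b k x) = bt b k (lf b k x)) \<and>
     (\<forall>(Z :: ('o, 'm, 'z) psh) u v.
        is_presheaf C Z \<and> nat_trans C B Z u \<and> nat_trans C Cc Z v \<and>
        (\<forall>b \<in> Ob C. \<forall>k. \<forall>x \<in> PSets A b k. u b k (tp b k x) = v b k (lf b k x)) \<longrightarrow>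
        (\<exists>w. nat_trans C D Z w \<and>
             (\<forall>b \<in> Ob C. \<forall>k. \<forall>y \<in> PSets B b k. w b k (rt b k y) = u b k y) \<and>
             (\<forall>b \<in> Ob C. \<forall>k. \<forall>y \<in> PSets Cc b k. w b k (bt b k y) = v b k y)) \<and>
        (\<forall>w w'. nat_trans C D Z w \<and>
             (\<forall>b \<in> Ob C. \<forall>k. \<forall>y \<in> PSets B b k. w b k (rt b k y) = u b k y) \<and>
             (\<forall>b \<in> Ob C. \<forall>k. \<forall>y \<in> PSets Cc b k. w b k (bt b k y) = v b k y) \<and>
             nat_trans C D Z w' \<and>
             (\<forall>b \<in> Ob C. \<forall>k. \<forall>y \<in> PSets B b k. w' b k (rt b k y) = u b k y) \<and>
             (\<forall>b \<in> Ob C. \<forall>k. \<forall>y \<in> PSets Cc b k. w' b k (bt b k y) = v b k y) \<longrightarrow>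
             (\<forall>b \<in> Ob C. \<forall>k. \<forall>z \<in> PSets D b k. w b k z = w' b k z)))"

text \<open>An n-simplex sigma of N O is a chain so 0 --sg 1--> so 1 --> ... --sg n--> so n.
  chainmap so sg i j is sigma(i -> j) for i <= j (composite sg j o ... o sg (i+1)).\<close>
definition is_chain :: "('o, 'm) cat \<Rightarrow> nat \<Rightarrow> (nat \<Rightarrow> 'o) \<Rightarrow> (nat \<Rightarrow> 'm) \<Rightarrow> bool" where
  "is_chain C n so sg \<longleftrightarrow> (\<forall>i \<le> n. so i \<in> Ob C) \<and> (\<forall>i. 1 \<le> i \<longrightarrow> i \<le> n \<longrightarrow> sg i \<in> Hom C (so (i - 1)) (so i))"

fun chainmap :: "('o, 'm) cat \<Rightarrow> (nat \<Rightarrow> 'o) \<Rightarrow> (nat \<Rightarrow> 'm) \<Rightarrow> nat \<Rightarrow> nat \<Rightarrow> 'm" where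
  "chainmap C so sg i 0 = Id C (so i)"
| "chainmap C so sg i (Suc j) = (if Suc j \<le> i then Id C (so i) else Comp C (sg (Suc j)) (chainmap C so sg i j))"

definition rep_times :: "('o, 'm) cat \<Rightarrow> 'o \<Rightarrow> nat \<Rightarrow> ('o, 'm, 'm \<times> (nat \<Rightarrow> nat)) psh" where
  "rep_times C c n =
     \<lparr> PSets = (\<lambda>b k. {(g, \<alpha>). g \<in> Hom C b c \<and> \<alpha> \<in> Delta k n}),
       PAct = (\<lambda>f k k' \<beta> (g, \<alpha>). (Comp C g f, dcomp k' \<alpha> \<beta>)) \<rparr>"

text \<open>A k-simplex of (F sigma)(b) is (alpha, omega) with omega = [h, m_1, ..., m_k] the chain
  b --h--> sigma(alpha 0) --> ... --> sigma(alpha k), m_i = sigma(alpha(i-1) -> alpha i).\<close>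
definition Fsig :: "('o, 'm) cat \<Rightarrow> nat \<Rightarrow> (nat \<Rightarrow> 'o) \<Rightarrow> (nat \<Rightarrow> 'm) \<Rightarrow> ('o, 'm, (nat \<Rightarrow> nat) \<times> 'm list) psh" where
  "Fsig C n so sg =
     \<lparr> PSets = (\<lambda>b k. {(\<alpha>, \<omega>). \<alpha> \<in> Delta k n \<and> length \<omega> = Suc k \<and>
                          \<omega> ! 0 \<in> Hom C b (so (\<alpha> 0)) \<and>
                          (\<forall>i. 1 \<le> i \<longrightarrow> i \<le> k \<longrightarrow> \<omega> ! i = chainmap C so sg (\<alpha> (i - 1)) (\<alpha> i))}),
       PAct = (\<lambda>f k k' \<beta> (\<alpha>, \<omega>).
                 (dcomp k' \<alpha> \<beta>,
                  Comp C (Comp C (chainmap C so sg (\<alpha> 0) (\<alpha> (\<beta> 0))) (\<omega> ! 0)) f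
                  # map (\<lambda>i. chainmap C so sg (\<alpha> (\<beta> (i - 1))) (\<alpha> (\<beta> i))) [1..<Suc k'])) \<rparr>"

definition iota :: "('o, 'm) cat \<Rightarrow> (nat \<Rightarrow> 'o) \<Rightarrow> (nat \<Rightarrow> 'm) \<Rightarrow> 'o \<Rightarrow> nat \<Rightarrow> 'm \<times> (nat \<Rightarrow> nat) \<Rightarrow> (nat \<Rightarrow> nat) \<times> 'm list" where
  "iota C so sg b k = (\<lambda>(g, \<alpha>).
     (\<alpha>, Comp C (chainmap C so sg 0 (\<alpha> 0)) g
          # map (\<lambda>i. chainmap C so sg (\<alpha> (i - 1)) (\<alpha> i)) [1..<Suc k]))"

end

theory Submission
  imports Defs
begin

(* A k-simplex (alpha, omega) of F sigma either starts at vertex 0, and then it is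
   iota_n (omega 0, alpha), or it misses vertex 0, and then it is the image under delta_0 of the
   simplex (alpha - 1, omega) of F(sigma delta_0).  Hence iota_n and F(delta_0) are jointly
   surjective, and a simplex iota_n (g, alpha) with alpha missing vertex 0 is already the image
   of iota_(n-1) (g_1 g, alpha - 1), which is exactly what the square identifies.  A compatible
   pair (u, v) therefore extends by v on the first kind of simplices and by u on the second;
   naturality and uniqueness of the extension follow from joint surjectivity.  For n = 0 every
   simplex starts at vertex 0, and iota_0 is invertible. *)

lemma comp_in_Hom:
  "small_category C \<Longrightarrow> f \<in> Hom C a b \<Longrightarrow> g \<in> Hom C b c \<Longrightarrow> Comp C g f \<in> Hom C a c"
  unfolding small_category_def Hom_def by auto

lemma Id_in_Hom: "small_category C \<Longrightarrow> a \<in> Ob C \<Longrightarrow> Id C a \<in> Hom C a a"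
  unfolding small_category_def by auto

lemma comp_Id_left: "small_category C \<Longrightarrow> f \<in> Hom C a b \<Longrightarrow> Comp C (Id C b) f = f"
  unfolding small_category_def Hom_def by auto

lemma comp_Id_right: "small_category C \<Longrightarrow> f \<in> Hom C a b \<Longrightarrow> Comp C f (Id C a) = f"
  unfolding small_category_def Hom_def by auto

lemma comp_assoc:
  "small_category C \<Longrightarrow> f \<in> Hom C a b \<Longrightarrow> g \<in> Hom C b c \<Longrightarrow> h \<in> Hom C c d \<Longrightarrow>
   Comp C h (Comp C g f) = Comp C (Comp C h g) f"
  unfolding small_category_def Hom_def by auto

lemma comp_regroup:
  assumes cat: "small_category C" and f': "f' \<in> Hom C a b" and f: "f \<in> Hom C b c"
    and h: "h \<in> Hom C c d" and p: "p \<in> Hom C d e" and q: "q \<in> Hom C e e'"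
  shows "Comp C (Comp C q (Comp C (Comp C p h) f)) f'
       = Comp C (Comp C (Comp C q p) h) (Comp C f f')"
proof -
  have "Comp C q (Comp C (Comp C p h) f) = Comp C (Comp C (Comp C q p) h) f"
    using comp_assoc[OF cat f comp_in_Hom[OF cat h p] q] comp_assoc[OF cat h p q] by simp
  then show ?thesis
    using comp_assoc[OF cat f' f comp_in_Hom[OF cat h comp_in_Hom[OF cat p q]]] by simp
qed

lemma chainmap_trivial [simp]: "j \<le> i \<Longrightarrow> chainmap C so sg i j = Id C (so i)"
  by (induction j) auto

lemma chainmap_shift [simp]:
  "chainmap C (\<lambda>i. so (Suc i)) (\<lambda>i. sg (Suc i)) i j = chainmap C so sg (Suc i) (Suc j)"
  by (induction j) auto

lemma is_chain_arrow: "is_chain C n so sg \<Longrightarrow> Suc j \<le> n \<Longrightarrow> sg (Suc j) \<in> Hom C (so j) (so (Suc j))"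
  unfolding is_chain_def by (metis diff_Suc_1 le_add1 plus_1_eq_Suc)

lemma is_chain_shift:
  assumes "is_chain C n so sg" and "0 < n"
  shows "is_chain C (n - 1) (\<lambda>i. so (Suc i)) (\<lambda>i. sg (Suc i))"
  unfolding is_chain_def
proof (intro conjI allI impI)
  fix i
  show "so (Suc i) \<in> Ob C" if "i \<le> n - 1"
    using assms that by (simp add: is_chain_def)
  show "sg (Suc i) \<in> Hom C (so (Suc (i - 1))) (so (Suc i))" if "1 \<le> i" "i \<le> n - 1"
    using is_chain_arrow[OF assms(1), of i] that by simp
qed

lemma chainmap_in_Hom:
  assumes cat: "small_category C" and chain: "is_chain C n so sg"
  shows "i \<le> j \<Longrightarrow> j \<le> n \<Longrightarrow> chainmap C so sg i j \<in> Hom C (so i) (so j)"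
proof (induction j)
  case 0
  then show ?case using chain Id_in_Hom[OF cat, of "so 0"] by (simp add: is_chain_def)
next
  case (Suc j)
  show ?case
  proof (cases "Suc j \<le> i")
    case True
    then show ?thesis
      using chain Id_in_Hom[OF cat, of "so i"] Suc by (simp add: is_chain_def)
  next
    case False
    then show ?thesis
      using Suc comp_in_Hom[OF cat _ is_chain_arrow[OF chain]] by simp
  qed
qed

lemma chainmap_comp:
  assumes cat: "small_category C" and chain: "is_chain C n so sg"
  shows "i \<le> j \<Longrightarrow> j \<le> l \<Longrightarrow> l \<le> n \<Longrightarrow>
    Comp C (chainmap C so sg j l) (chainmap C so sg i j) = chainmap C so sg i l"
proof (induction l)
  case 0
  then show ?case using chainmap_in_Hom[OF assms, of 0 0] comp_Id_left[OF cat] by auto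
next
  case (Suc l)
  show ?case
  proof (cases "Suc l \<le> j")
    case True
    then show ?thesis
      using Suc chainmap_in_Hom[OF assms, of i j] comp_Id_left[OF cat] by simp
  next
    case False
    have ij: "chainmap C so sg i j \<in> Hom C (so i) (so j)"
      and jl: "chainmap C so sg j l \<in> Hom C (so j) (so l)"
      using Suc False chainmap_in_Hom[OF assms] by simp_all
    have "Comp C (chainmap C so sg j (Suc l)) (chainmap C so sg i j)
        = Comp C (Comp C (sg (Suc l)) (chainmap C so sg j l)) (chainmap C so sg i j)"
      using False by simp
    also have "\<dots> = Comp C (sg (Suc l)) (Comp C (chainmap C so sg j l) (chainmap C so sg i j))"
      using comp_assoc[OF cat ij jl is_chain_arrow[OF chain]] Suc by simp
    also have "\<dots> = chainmap C so sg i (Suc l)" using Suc False by simp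
    finally show ?thesis .
  qed
qed

declare chainmap.simps [simp del]

lemma Delta_bound: "\<alpha> \<in> Delta k l \<Longrightarrow> i \<le> k \<Longrightarrow> \<alpha> i \<le> l"
  by (simp add: Delta_def)

lemma Delta_mono: "\<alpha> \<in> Delta k l \<Longrightarrow> i \<le> j \<Longrightarrow> j \<le> k \<Longrightarrow> \<alpha> i \<le> \<alpha> j"
  by (simp add: Delta_def)

lemma Delta_beyond: "\<alpha> \<in> Delta k l \<Longrightarrow> k < i \<Longrightarrow> \<alpha> i = 0"
  by (simp add: Delta_def)

lemma dcomp_Delta: "\<alpha> \<in> Delta k n \<Longrightarrow> \<beta> \<in> Delta k' k \<Longrightarrow> dcomp k' \<alpha> \<beta> \<in> Delta k' n"
  unfolding Delta_def dcomp_def by auto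

lemma dcomp_did: "\<alpha> \<in> Delta k n \<Longrightarrow> dcomp k \<alpha> (did k) = \<alpha>"
  unfolding Delta_def dcomp_def did_def by auto

lemma dcomp_assoc:
  "\<beta> \<in> Delta k' k \<Longrightarrow> \<beta>' \<in> Delta k'' k' \<Longrightarrow>
   dcomp k'' (dcomp k' \<alpha> \<beta>) \<beta>' = dcomp k'' \<alpha> (dcomp k'' \<beta> \<beta>')"
  unfolding Delta_def dcomp_def by auto

lemma dcomp_apply [simp]: "i \<le> k' \<Longrightarrow> dcomp k' \<alpha> \<beta> i = \<alpha> (\<beta> i)"
  by (simp add: dcomp_def)

lemma delta0_comp_apply [simp]: "i \<le> k \<Longrightarrow> delta0_comp k \<alpha> i = Suc (\<alpha> i)"
  by (simp add: delta0_comp_def)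

lemma delta0_comp_Delta: "\<alpha> \<in> Delta k (n - 1) \<Longrightarrow> 0 < n \<Longrightarrow> delta0_comp k \<alpha> \<in> Delta k n"
  unfolding Delta_def delta0_comp_def by auto

lemma delta0_comp_dcomp:
  "\<beta> \<in> Delta k' k \<Longrightarrow> delta0_comp k' (dcomp k' \<alpha> \<beta>) = dcomp k' (delta0_comp k \<alpha>) \<beta>"
  unfolding Delta_def delta0_comp_def dcomp_def by auto

definition delta0_pred :: "nat \<Rightarrow> (nat \<Rightarrow> nat) \<Rightarrow> (nat \<Rightarrow> nat)" where
  "delta0_pred k \<alpha> = (\<lambda>i. if i \<le> k then \<alpha> i - 1 else 0)"

lemma delta0_pred_Delta: "\<alpha> \<in> Delta k n \<Longrightarrow> delta0_pred k \<alpha> \<in> Delta k (n - 1)"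
  unfolding Delta_def delta0_pred_def by (auto simp: diff_le_mono)

lemma delta0_comp_pred:
  assumes "\<alpha> \<in> Delta k n" and "\<alpha> 0 \<noteq> 0"
  shows "delta0_comp k (delta0_pred k \<alpha>) = \<alpha>"
proof -
  have "0 < \<alpha> i" if "i \<le> k" for i
    using assms Delta_mono[OF assms(1), of 0 i] that by simp
  then show ?thesis
    using Delta_beyond[OF assms(1)] by (auto simp: fun_eq_iff delta0_comp_def delta0_pred_def)
qed

lemma delta0_pred_comp: "\<alpha> \<in> Delta k m \<Longrightarrow> delta0_pred k (delta0_comp k \<alpha>) = \<alpha>"
  using Delta_beyond by (fastforce simp: fun_eq_iff delta0_pred_def)

lemma Cons_map_upt_nth [simp]: "1 \<le> i \<Longrightarrow> i \<le> k \<Longrightarrow> (h # map F [1..<Suc k]) ! i = F i"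
  by (cases i) (auto simp del: upt_Suc simp add: nth_map)

lemma Cons_map_upt_eqI:
  assumes "length \<omega> = Suc k" "\<omega> ! 0 = h" "\<And>i. 1 \<le> i \<Longrightarrow> i \<le> k \<Longrightarrow> \<omega> ! i = F i"
  shows "h # map F [1..<Suc k] = \<omega>"
proof (rule nth_equalityI)
  show "length (h # map F [1..<Suc k]) = length \<omega>" using assms by simp
  fix i assume "i < length (h # map F [1..<Suc k])"
  then show "(h # map F [1..<Suc k]) ! i = \<omega> ! i"
    using assms by (cases "i = 0") (auto simp del: upt_Suc)
qed

lemma is_presheaf_act_mem:
  "is_presheaf C P \<Longrightarrow> b \<in> Ob C \<Longrightarrow> b' \<in> Ob C \<Longrightarrow> f \<in> Hom C b' b \<Longrightarrow> \<beta> \<in> Delta k' k \<Longrightarrow>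
   x \<in> PSets P b k \<Longrightarrow> PAct P f k k' \<beta> x \<in> PSets P b' k'"
  unfolding is_presheaf_def by auto

lemma nat_trans_mem:
  "nat_trans C P Q \<eta> \<Longrightarrow> b \<in> Ob C \<Longrightarrow> x \<in> PSets P b k \<Longrightarrow> \<eta> b k x \<in> PSets Q b k"
  unfolding nat_trans_def by blast

lemma nat_trans_natural:
  "nat_trans C P Q \<eta> \<Longrightarrow> b \<in> Ob C \<Longrightarrow> b' \<in> Ob C \<Longrightarrow> f \<in> Hom C b' b \<Longrightarrow> \<beta> \<in> Delta k' k \<Longrightarrow>
   x \<in> PSets P b k \<Longrightarrow> \<eta> b' k' (PAct P f k k' \<beta> x) = PAct Q f k k' \<beta> (\<eta> b k x)"
  unfolding nat_trans_def by blast

lemma nat_trans_comp: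
  "nat_trans C P Q \<eta> \<Longrightarrow> nat_trans C Q R \<theta> \<Longrightarrow> nat_trans C P R (\<lambda>b k x. \<theta> b k (\<eta> b k x))"
  unfolding nat_trans_def by auto

lemma nat_isoI_inverse:
  assumes P: "is_presheaf C P" and Q: "is_presheaf C Q" and \<eta>: "nat_trans C P Q \<eta>"
    and \<theta>_mem: "\<And>b k y. b \<in> Ob C \<Longrightarrow> y \<in> PSets Q b k \<Longrightarrow> \<theta> b k y \<in> PSets P b k"
    and \<theta>_\<eta>: "\<And>b k x. b \<in> Ob C \<Longrightarrow> x \<in> PSets P b k \<Longrightarrow> \<theta> b k (\<eta> b k x) = x"
    and \<eta>_\<theta>: "\<And>b k y. b \<in> Ob C \<Longrightarrow> y \<in> PSets Q b k \<Longrightarrow> \<eta> b k (\<theta> b k y) = y"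
  shows "nat_iso C P Q \<eta>"
proof -
  have "\<theta> b' k' (PAct Q f k k' \<beta> y) = PAct P f k k' \<beta> (\<theta> b k y)"
    if b: "b \<in> Ob C" and b': "b' \<in> Ob C" and f: "f \<in> Hom C b' b" and \<beta>: "\<beta> \<in> Delta k' k"
      and y: "y \<in> PSets Q b k" for b b' f k k' \<beta> y
  proof -
    have x: "\<theta> b k y \<in> PSets P b k" using \<theta>_mem b y .
    have "\<theta> b' k' (PAct Q f k k' \<beta> y) = \<theta> b' k' (PAct Q f k k' \<beta> (\<eta> b k (\<theta> b k y)))"
      using \<eta>_\<theta> b y by simp
    also have "\<dots> = \<theta> b' k' (\<eta> b' k' (PAct P f k k' \<beta> (\<theta> b k y)))"
      using nat_trans_natural[OF \<eta> b b' f \<beta> x] by simp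
    also have "\<dots> = PAct P f k k' \<beta> (\<theta> b k y)"
      using \<theta>_\<eta> b' is_presheaf_act_mem[OF P b b' f \<beta> x] by simp
    finally show ?thesis .
  qed
  then have "nat_trans C Q P \<theta>" unfolding nat_trans_def using \<theta>_mem by blast
  then show ?thesis unfolding nat_iso_def using P Q \<eta> \<theta>_\<eta> \<eta>_\<theta> by blast
qed

lemma natural_on_image:
  assumes B: "is_presheaf C B" and r: "nat_trans C B D r" and u: "nat_trans C B Z u"
    and w_r: "\<forall>b \<in> Ob C. \<forall>k. \<forall>y \<in> PSets B b k. w b k (r b k y) = u b k y"
    and b: "b \<in> Ob C" and b': "b' \<in> Ob C" and f: "f \<in> Hom C b' b" and \<beta>: "\<beta> \<in> Delta k' k"
    and y: "y \<in> PSets B b k"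
  shows "w b' k' (PAct D f k k' \<beta> (r b k y)) = PAct Z f k k' \<beta> (w b k (r b k y))"
proof -
  have "w b' k' (PAct D f k k' \<beta> (r b k y)) = w b' k' (r b' k' (PAct B f k k' \<beta> y))"
    using nat_trans_natural[OF r b b' f \<beta> y] by simp
  also have "\<dots> = u b' k' (PAct B f k k' \<beta> y)"
    using w_r b' is_presheaf_act_mem[OF B b b' f \<beta> y] by blast
  also have "\<dots> = PAct Z f k k' \<beta> (w b k (r b k y))"
    using nat_trans_natural[OF u b b' f \<beta> y] w_r b y by simp
  finally show ?thesis .
qed

lemma nat_trans_on_cover:
  assumes B: "is_presheaf C B" and Cc: "is_presheaf C Cc"
    and r: "nat_trans C B D r" and s: "nat_trans C Cc D s"
    and cover: "\<And>b k z. b \<in> Ob C \<Longrightarrow> z \<in> PSets D b k \<Longrightarrow>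
      (\<exists>y \<in> PSets B b k. z = r b k y) \<or> (\<exists>x \<in> PSets Cc b k. z = s b k x)"
    and u: "nat_trans C B Z u" and v: "nat_trans C Cc Z v"
    and w_r: "\<forall>b \<in> Ob C. \<forall>k. \<forall>y \<in> PSets B b k. w b k (r b k y) = u b k y"
    and w_s: "\<forall>b \<in> Ob C. \<forall>k. \<forall>x \<in> PSets Cc b k. w b k (s b k x) = v b k x"
  shows "nat_trans C D Z w"
  unfolding nat_trans_def
proof (intro conjI ballI allI)
  fix b k z assume b: "b \<in> Ob C" and z: "z \<in> PSets D b k"
  from cover[OF b z] show "w b k z \<in> PSets Z b k"
    using nat_trans_mem[OF u b] nat_trans_mem[OF v b] w_r w_s b by auto
next
  fix b b' f k k' \<beta> z
  assume b: "b \<in> Ob C" and b': "b' \<in> Ob C" and f: "f \<in> Hom C b' b" and \<beta>: "\<beta> \<in> Delta k' k"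
    and z: "z \<in> PSets D b k"
  from cover[OF b z] show "w b' k' (PAct D f k k' \<beta> z) = PAct Z f k k' \<beta> (w b k z)"
    using natural_on_image[OF B r u w_r b b' f \<beta>] natural_on_image[OF Cc s v w_s b b' f \<beta>]
    by auto
qed

lemma is_pushoutI_cover:
  fixes A :: "('o, 'm, 'a) psh" and B :: "('o, 'm, 'b) psh"
    and Cc :: "('o, 'm, 'c) psh" and D :: "('o, 'm, 'd) psh"
  assumes A: "is_presheaf C A" and B: "is_presheaf C B" and Cc: "is_presheaf C Cc"
    and D: "is_presheaf C D"
    and tp: "nat_trans C A B tp" and lf: "nat_trans C A Cc lf"
    and rt: "nat_trans C B D rt" and bt: "nat_trans C Cc D bt"
    and square: "\<forall>b \<in> Ob C. \<forall>k. \<forall>x \<in> PSets A b k. rt b k (tp b k x) = bt b k (lf b k x)"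
    and cover: "\<And>b k z. b \<in> Ob C \<Longrightarrow> z \<in> PSets D b k \<Longrightarrow>
      (\<exists>y \<in> PSets B b k. z = rt b k y) \<or> (\<exists>x \<in> PSets Cc b k. z = bt b k x)"
    and extend: "\<And>(Z :: ('o, 'm, 'z) psh) u v.
      is_presheaf C Z \<Longrightarrow> nat_trans C B Z u \<Longrightarrow> nat_trans C Cc Z v \<Longrightarrow>
      \<forall>b \<in> Ob C. \<forall>k. \<forall>x \<in> PSets A b k. u b k (tp b k x) = v b k (lf b k x) \<Longrightarrow>
      \<exists>w. (\<forall>b \<in> Ob C. \<forall>k. \<forall>y \<in> PSets B b k. w b k (rt b k y) = u b k y) \<and>
          (\<forall>b \<in> Ob C. \<forall>k. \<forall>x \<in> PSets Cc b k. w b k (bt b k x) = v b k x)"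
  shows "is_pushout TYPE('z) C A B Cc D tp lf rt bt"
  unfolding is_pushout_def
proof (intro conjI allI impI ballI; (elim conjE)?)
  fix Z :: "('o, 'm, 'z) psh" and u v
  assume "is_presheaf C Z" "nat_trans C B Z u" "nat_trans C Cc Z v"
    "\<forall>b \<in> Ob C. \<forall>k. \<forall>x \<in> PSets A b k. u b k (tp b k x) = v b k (lf b k x)"
  then obtain w where
    "\<forall>b \<in> Ob C. \<forall>k. \<forall>y \<in> PSets B b k. w b k (rt b k y) = u b k y"
    "\<forall>b \<in> Ob C. \<forall>k. \<forall>x \<in> PSets Cc b k. w b k (bt b k x) = v b k x"
    using extend by blast
  with nat_trans_on_cover[OF B Cc rt bt cover] \<open>nat_trans C B Z u\<close> \<open>nat_trans C Cc Z v\<close>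
  show "\<exists>w. nat_trans C D Z w \<and>
      (\<forall>b \<in> Ob C. \<forall>k. \<forall>y \<in> PSets B b k. w b k (rt b k y) = u b k y) \<and>
      (\<forall>b \<in> Ob C. \<forall>k. \<forall>y \<in> PSets Cc b k. w b k (bt b k y) = v b k y)"
    by blast
next
  fix u :: "'o \<Rightarrow> nat \<Rightarrow> 'b \<Rightarrow> 'z" and v :: "'o \<Rightarrow> nat \<Rightarrow> 'c \<Rightarrow> 'z" and w w' b k z
  assume eqs: "\<forall>b \<in> Ob C. \<forall>k. \<forall>y \<in> PSets B b k. w b k (rt b k y) = u b k y"
    "\<forall>b \<in> Ob C. \<forall>k. \<forall>y \<in> PSets Cc b k. w b k (bt b k y) = v b k y"
    "\<forall>b \<in> Ob C. \<forall>k. \<forall>y \<in> PSets B b k. w' b k (rt b k y) = u b k y"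
    "\<forall>b \<in> Ob C. \<forall>k. \<forall>y \<in> PSets Cc b k. w' b k (bt b k y) = v b k y"
    and b: "b \<in> Ob C" and z: "z \<in> PSets D b k"
  from cover[OF b z] show "w b k z = w' b k z"
    using b eqs by auto
qed (use assms in auto)

lemma rep_times_mem [simp]:
  "(g, \<alpha>) \<in> PSets (rep_times C c n) b k \<longleftrightarrow> g \<in> Hom C b c \<and> \<alpha> \<in> Delta k n"
  by (simp add: rep_times_def)

lemma rep_times_act [simp]:
  "PAct (rep_times C c n) f k k' \<beta> (g, \<alpha>) = (Comp C g f, dcomp k' \<alpha> \<beta>)"
  by (simp add: rep_times_def)

lemma rep_times_presheaf: "small_category C \<Longrightarrow> is_presheaf C (rep_times C c n)"
  unfolding is_presheaf_def
  by (auto simp: comp_in_Hom dcomp_Delta comp_Id_right dcomp_did dcomp_assoc comp_assoc)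

lemma rep_times_postcomp_nat_trans:
  assumes cat: "small_category C" and h: "h \<in> Hom C c c'"
  shows "nat_trans C (rep_times C c n) (rep_times C c' n) (\<lambda>b k (g, \<alpha>). (Comp C h g, \<alpha>))"
  unfolding nat_trans_def rep_times_def
  using comp_in_Hom[OF cat _ h] comp_assoc[OF cat _ _ h] by auto

lemma Fsig_mem:
  "(\<alpha>, \<omega>) \<in> PSets (Fsig C n so sg) b k \<longleftrightarrow>
   \<alpha> \<in> Delta k n \<and> length \<omega> = Suc k \<and> \<omega> ! 0 \<in> Hom C b (so (\<alpha> 0)) \<and>
   (\<forall>i. 1 \<le> i \<longrightarrow> i \<le> k \<longrightarrow> \<omega> ! i = chainmap C so sg (\<alpha> (i - 1)) (\<alpha> i))"
  by (simp add: Fsig_def)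

lemma Fsig_act:
  "PAct (Fsig C n so sg) f k k' \<beta> (\<alpha>, \<omega>) =
   (dcomp k' \<alpha> \<beta>,
    Comp C (Comp C (chainmap C so sg (\<alpha> 0) (\<alpha> (\<beta> 0))) (\<omega> ! 0)) f
    # map (\<lambda>i. chainmap C so sg (\<alpha> (\<beta> (i - 1))) (\<alpha> (\<beta> i))) [1..<Suc k'])"
  by (simp add: Fsig_def)

lemma iota_apply:
  "iota C so sg b k (g, \<alpha>) =
   (\<alpha>, Comp C (chainmap C so sg 0 (\<alpha> 0)) g
        # map (\<lambda>i. chainmap C so sg (\<alpha> (i - 1)) (\<alpha> i)) [1..<Suc k])"
  by (simp add: iota_def)

locale nerve_simplex =
  fixes C :: "('o, 'm) cat" and n :: nat and so :: "nat \<Rightarrow> 'o" and sg :: "nat \<Rightarrow> 'm"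
  assumes cat: "small_category C" and chain: "is_chain C n so sg"
begin

abbreviation \<sigma> :: "nat \<Rightarrow> nat \<Rightarrow> 'm" where
  "\<sigma> \<equiv> chainmap C so sg"

lemma \<sigma>_in_Hom: "i \<le> j \<Longrightarrow> j \<le> n \<Longrightarrow> \<sigma> i j \<in> Hom C (so i) (so j)"
  using chainmap_in_Hom[OF cat chain] by blast

lemma \<sigma>_comp: "i \<le> j \<Longrightarrow> j \<le> l \<Longrightarrow> l \<le> n \<Longrightarrow> Comp C (\<sigma> j l) (\<sigma> i j) = \<sigma> i l"
  using chainmap_comp[OF cat chain] by blast

lemma Fsig_act_mem:
  assumes f: "f \<in> Hom C b' b" and \<beta>: "\<beta> \<in> Delta k' k" and x: "x \<in> PSets (Fsig C n so sg) b k"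
  shows "PAct (Fsig C n so sg) f k k' \<beta> x \<in> PSets (Fsig C n so sg) b' k'"
proof -
  obtain \<alpha> \<omega> where x_eq: "x = (\<alpha>, \<omega>)" by (cases x)
  have \<alpha>: "\<alpha> \<in> Delta k n" and \<omega>0: "\<omega> ! 0 \<in> Hom C b (so (\<alpha> 0))"
    using x x_eq by (auto simp: Fsig_mem)
  have "\<alpha> 0 \<le> \<alpha> (\<beta> 0)" "\<alpha> (\<beta> 0) \<le> n"
    using Delta_mono[OF \<alpha>] Delta_bound[OF \<alpha>] Delta_bound[OF \<beta>, of 0] by auto
  then have "Comp C (Comp C (\<sigma> (\<alpha> 0) (\<alpha> (\<beta> 0))) (\<omega> ! 0)) f \<in> Hom C b' (so (\<alpha> (\<beta> 0)))"
    by (intro comp_in_Hom[OF cat f comp_in_Hom[OF cat \<omega>0 \<sigma>_in_Hom]])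
  then show ?thesis
    unfolding x_eq Fsig_act Fsig_mem using dcomp_Delta[OF \<alpha> \<beta>] by (auto simp del: upt_Suc)
qed

lemma Fsig_act_Id:
  assumes x: "x \<in> PSets (Fsig C n so sg) b k"
  shows "PAct (Fsig C n so sg) (Id C b) k k (did k) x = x"
proof -
  obtain \<alpha> \<omega> where x_eq: "x = (\<alpha>, \<omega>)" by (cases x)
  have \<alpha>: "\<alpha> \<in> Delta k n" and \<omega>0: "\<omega> ! 0 \<in> Hom C b (so (\<alpha> 0))" and len: "length \<omega> = Suc k"
    and \<omega>i: "\<And>i. 1 \<le> i \<Longrightarrow> i \<le> k \<Longrightarrow> \<omega> ! i = \<sigma> (\<alpha> (i - 1)) (\<alpha> i)"
    using x x_eq by (auto simp: Fsig_mem)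
  have "Comp C (Comp C (\<sigma> (\<alpha> 0) (\<alpha> 0)) (\<omega> ! 0)) (Id C b) = \<omega> ! 0"
    using comp_Id_left[OF cat \<omega>0] comp_Id_right[OF cat \<omega>0] by simp
  then have "Comp C (Comp C (\<sigma> (\<alpha> 0) (\<alpha> (did k 0))) (\<omega> ! 0)) (Id C b)
        # map (\<lambda>i. \<sigma> (\<alpha> (did k (i - 1))) (\<alpha> (did k i))) [1..<Suc k] = \<omega>"
    by (intro Cons_map_upt_eqI) (auto simp: len \<omega>i did_def)
  then show ?thesis unfolding x_eq Fsig_act by (simp add: dcomp_did[OF \<alpha>])
qed

lemma Fsig_act_comp:
  assumes f: "f \<in> Hom C b' b" and f': "f' \<in> Hom C b'' b'" and \<beta>: "\<beta> \<in> Delta k' k"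
    and \<beta>': "\<beta>' \<in> Delta k'' k'" and x: "x \<in> PSets (Fsig C n so sg) b k"
  shows "PAct (Fsig C n so sg) f' k' k'' \<beta>' (PAct (Fsig C n so sg) f k k' \<beta> x)
       = PAct (Fsig C n so sg) (Comp C f f') k k'' (dcomp k'' \<beta> \<beta>') x"
proof -
  obtain \<alpha> \<omega> where x_eq: "x = (\<alpha>, \<omega>)" by (cases x)
  have \<alpha>: "\<alpha> \<in> Delta k n" and \<omega>0: "\<omega> ! 0 \<in> Hom C b (so (\<alpha> 0))"
    using x x_eq by (auto simp: Fsig_mem)
  have \<beta>0: "\<beta> 0 \<le> k" "\<beta>' 0 \<le> k'" "\<beta> (\<beta>' 0) \<le> k"
    using Delta_bound[OF \<beta>] Delta_bound[OF \<beta>'] by auto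
  have mono: "\<alpha> 0 \<le> \<alpha> (\<beta> 0)" "\<alpha> (\<beta> 0) \<le> \<alpha> (\<beta> (\<beta>' 0))" "\<alpha> (\<beta> (\<beta>' 0)) \<le> n"
    using Delta_mono[OF \<alpha>] Delta_bound[OF \<alpha>] \<beta>0 Delta_mono[OF \<beta>] by auto
  define p where "p = \<sigma> (\<alpha> 0) (\<alpha> (\<beta> 0))"
  define q where "q = \<sigma> (\<alpha> (\<beta> 0)) (\<alpha> (\<beta> (\<beta>' 0)))"
  have p: "p \<in> Hom C (so (\<alpha> 0)) (so (\<alpha> (\<beta> 0)))"
    and q: "q \<in> Hom C (so (\<alpha> (\<beta> 0))) (so (\<alpha> (\<beta> (\<beta>' 0))))"
    unfolding p_def q_def using \<sigma>_in_Hom mono by auto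
  have head: "Comp C (Comp C q (Comp C (Comp C p (\<omega> ! 0)) f)) f'
      = Comp C (Comp C (\<sigma> (\<alpha> 0) (\<alpha> (\<beta> (\<beta>' 0)))) (\<omega> ! 0)) (Comp C f f')"
    using comp_regroup[OF cat f' f \<omega>0 p q] \<sigma>_comp mono by (simp add: p_def q_def)
  have tail: "map (\<lambda>i. \<sigma> (dcomp k' \<alpha> \<beta> (\<beta>' (i - 1))) (dcomp k' \<alpha> \<beta> (\<beta>' i))) [1..<Suc k'']
      = map (\<lambda>i. \<sigma> (\<alpha> (dcomp k'' \<beta> \<beta>' (i - 1))) (\<alpha> (dcomp k'' \<beta> \<beta>' i))) [1..<Suc k'']"
    using Delta_bound[OF \<beta>'] by (intro map_cong) auto
  show ?thesis unfolding x_eq Fsig_act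
    using head tail \<beta>0 dcomp_assoc[OF \<beta> \<beta>'] by (simp add: p_def q_def del: upt_Suc)
qed

lemma Fsig_presheaf: "is_presheaf C (Fsig C n so sg)"
  unfolding is_presheaf_def
  by (intro conjI ballI allI;
      (rule Fsig_act_mem | rule Fsig_act_Id | rule Fsig_act_comp); assumption)

lemma iota_mem:
  assumes x: "x \<in> PSets (rep_times C (so 0) n) b k"
  shows "iota C so sg b k x \<in> PSets (Fsig C n so sg) b k"
proof -
  obtain g \<alpha> where x_eq: "x = (g, \<alpha>)" by (cases x)
  have g: "g \<in> Hom C b (so 0)" and \<alpha>: "\<alpha> \<in> Delta k n" using x x_eq by auto
  have "Comp C (\<sigma> 0 (\<alpha> 0)) g \<in> Hom C b (so (\<alpha> 0))"
    using comp_in_Hom[OF cat g \<sigma>_in_Hom] Delta_bound[OF \<alpha>] by auto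
  then show ?thesis unfolding x_eq iota_apply Fsig_mem using \<alpha> by (auto simp del: upt_Suc)
qed

lemma iota_nat_trans: "nat_trans C (rep_times C (so 0) n) (Fsig C n so sg) (iota C so sg)"
  unfolding nat_trans_def
proof (intro conjI ballI allI)
  fix b k x assume "x \<in> PSets (rep_times C (so 0) n) b k"
  then show "iota C so sg b k x \<in> PSets (Fsig C n so sg) b k" by (rule iota_mem)
next
  fix b b' f k k' \<beta> x
  assume f: "f \<in> Hom C b' b" and \<beta>: "\<beta> \<in> Delta k' k"
    and x: "x \<in> PSets (rep_times C (so 0) n) b k"
  obtain g \<alpha> where x_eq: "x = (g, \<alpha>)" by (cases x)
  have g: "g \<in> Hom C b (so 0)" and \<alpha>: "\<alpha> \<in> Delta k n" using x x_eq by auto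
  have mono: "\<alpha> 0 \<le> \<alpha> (\<beta> 0)" "\<alpha> (\<beta> 0) \<le> n"
    using Delta_mono[OF \<alpha>] Delta_bound[OF \<alpha>] Delta_bound[OF \<beta>, of 0] by auto
  have s1: "\<sigma> 0 (\<alpha> 0) \<in> Hom C (so 0) (so (\<alpha> 0))"
    and s2: "\<sigma> (\<alpha> 0) (\<alpha> (\<beta> 0)) \<in> Hom C (so (\<alpha> 0)) (so (\<alpha> (\<beta> 0)))"
    using \<sigma>_in_Hom mono by auto
  have "Comp C (Comp C (\<sigma> (\<alpha> 0) (\<alpha> (\<beta> 0))) (Comp C (\<sigma> 0 (\<alpha> 0)) g)) f
      = Comp C (Comp C (Comp C (\<sigma> (\<alpha> 0) (\<alpha> (\<beta> 0))) (\<sigma> 0 (\<alpha> 0))) g) f"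
    using comp_assoc[OF cat g s1 s2] by simp
  also have "\<dots> = Comp C (\<sigma> 0 (\<alpha> (\<beta> 0))) (Comp C g f)"
    using \<sigma>_comp[of 0 "\<alpha> 0" "\<alpha> (\<beta> 0)"] mono comp_assoc[OF cat f g comp_in_Hom[OF cat s1 s2]]
    by simp
  finally have head: "Comp C (Comp C (\<sigma> (\<alpha> 0) (\<alpha> (\<beta> 0))) (Comp C (\<sigma> 0 (\<alpha> 0)) g)) f
      = Comp C (\<sigma> 0 (\<alpha> (\<beta> 0))) (Comp C g f)" .
  have tail: "map (\<lambda>i. \<sigma> (dcomp k' \<alpha> \<beta> (i - 1)) (dcomp k' \<alpha> \<beta> i)) [1..<Suc k']
      = map (\<lambda>i. \<sigma> (\<alpha> (\<beta> (i - 1))) (\<alpha> (\<beta> i))) [1..<Suc k']"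
    by (intro map_cong) auto
  show "iota C so sg b' k' (PAct (rep_times C (so 0) n) f k k' \<beta> x) =
        PAct (Fsig C n so sg) f k k' \<beta> (iota C so sg b k x)"
    unfolding x_eq rep_times_act iota_apply Fsig_act using head tail by (simp del: upt_Suc)
qed

lemma iota_vertex0_preimage:
  assumes z: "(\<alpha>, \<omega>) \<in> PSets (Fsig C n so sg) b k" and \<alpha>0: "\<alpha> 0 = 0"
  shows "(\<omega> ! 0, \<alpha>) \<in> PSets (rep_times C (so 0) n) b k"
    and "iota C so sg b k (\<omega> ! 0, \<alpha>) = (\<alpha>, \<omega>)"
proof -
  have \<alpha>: "\<alpha> \<in> Delta k n" and \<omega>0: "\<omega> ! 0 \<in> Hom C b (so 0)" and len: "length \<omega> = Suc k"
    and \<omega>i: "\<And>i. 1 \<le> i \<Longrightarrow> i \<le> k \<Longrightarrow> \<omega> ! i = \<sigma> (\<alpha> (i - 1)) (\<alpha> i)"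
    using z \<alpha>0 by (auto simp: Fsig_mem)
  show "(\<omega> ! 0, \<alpha>) \<in> PSets (rep_times C (so 0) n) b k" using \<alpha> \<omega>0 by simp
  have "Comp C (\<sigma> 0 (\<alpha> 0)) (\<omega> ! 0) # map (\<lambda>i. \<sigma> (\<alpha> (i - 1)) (\<alpha> i)) [1..<Suc k] = \<omega>"
    using \<alpha>0 \<omega>0 comp_Id_left[OF cat \<omega>0] by (intro Cons_map_upt_eqI) (auto simp: len \<omega>i)
  then show "iota C so sg b k (\<omega> ! 0, \<alpha>) = (\<alpha>, \<omega>)" unfolding iota_apply by simp
qed

lemma iota_nat_iso_dim0:
  assumes "n = 0"
  shows "nat_iso C (rep_times C (so 0) n) (Fsig C n so sg) (iota C so sg)"
proof -
  define \<theta> :: "'o \<Rightarrow> nat \<Rightarrow> (nat \<Rightarrow> nat) \<times> 'm list \<Rightarrow> 'm \<times> (nat \<Rightarrow> nat)"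
    where "\<theta> = (\<lambda>b k (\<alpha>, \<omega>). (\<omega> ! 0, \<alpha>))"
  have vertex0: "\<alpha> 0 = 0" if "\<alpha> \<in> Delta k n" for \<alpha> k
    using Delta_bound[OF that, of 0] assms by simp
  have "\<theta> b k z \<in> PSets (rep_times C (so 0) n) b k \<and> iota C so sg b k (\<theta> b k z) = z"
    if "z \<in> PSets (Fsig C n so sg) b k" for b k z
  proof -
    obtain \<alpha> \<omega> where z_eq: "z = (\<alpha>, \<omega>)" by (cases z)
    then have "\<alpha> 0 = 0" using that vertex0 by (auto simp: Fsig_mem)
    then show ?thesis using iota_vertex0_preimage that z_eq by (simp add: \<theta>_def)
  qed
  moreover have "\<theta> b k (iota C so sg b k x) = x"
    if "x \<in> PSets (rep_times C (so 0) n) b k" for b k x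
  proof -
    obtain g \<alpha> where x_eq: "x = (g, \<alpha>)" by (cases x)
    then have "g \<in> Hom C b (so 0)" and "\<alpha> 0 = 0" using that vertex0 by auto
    then show ?thesis using comp_Id_left[OF cat] x_eq by (simp add: iota_apply \<theta>_def)
  qed
  ultimately show ?thesis
    using nat_isoI_inverse[OF rep_times_presheaf[OF cat] Fsig_presheaf iota_nat_trans, of \<theta>]
    by blast
qed

end

locale nerve_simplex_pos = nerve_simplex C n so sg
  for C :: "('o, 'm) cat" and n :: nat and so :: "nat \<Rightarrow> 'o" and sg :: "nat \<Rightarrow> 'm" +
  assumes n_pos: "0 < n"
begin

sublocale face: nerve_simplex C "n - 1" "\<lambda>i. so (Suc i)" "\<lambda>i. sg (Suc i)"
  using cat is_chain_shift[OF chain n_pos] by unfold_locales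

abbreviation Fsig_face :: "('o, 'm, (nat \<Rightarrow> nat) \<times> 'm list) psh" where
  "Fsig_face \<equiv> Fsig C (n - 1) (\<lambda>i. so (Suc i)) (\<lambda>i. sg (Suc i))"

abbreviation iota_face :: "'o \<Rightarrow> nat \<Rightarrow> 'm \<times> (nat \<Rightarrow> nat) \<Rightarrow> (nat \<Rightarrow> nat) \<times> 'm list" where
  "iota_face \<equiv> \<lambda>b k (g, \<alpha>). iota C (\<lambda>i. so (Suc i)) (\<lambda>i. sg (Suc i)) b k (Comp C (sg 1) g, \<alpha>)"

abbreviation rep_delta0 :: "'o \<Rightarrow> nat \<Rightarrow> 'm \<times> (nat \<Rightarrow> nat) \<Rightarrow> 'm \<times> (nat \<Rightarrow> nat)" where
  "rep_delta0 \<equiv> \<lambda>b k (g, \<alpha>). (g, delta0_comp k \<alpha>)"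

abbreviation Fsig_delta0 :: "'o \<Rightarrow> nat \<Rightarrow> (nat \<Rightarrow> nat) \<times> 'm list \<Rightarrow> (nat \<Rightarrow> nat) \<times> 'm list" where
  "Fsig_delta0 \<equiv> \<lambda>b k (\<alpha>, \<omega>). (delta0_comp k \<alpha>, \<omega>)"

lemma sg1_in_Hom: "sg 1 \<in> Hom C (so 0) (so (Suc 0))"
  using is_chain_arrow[OF chain, of 0] n_pos by simp

lemma iota_face_nat_trans: "nat_trans C (rep_times C (so 0) (n - 1)) Fsig_face iota_face"
proof -
  have "iota_face = (\<lambda>b k x. iota C (\<lambda>i. so (Suc i)) (\<lambda>i. sg (Suc i)) b k
                        ((\<lambda>b k (g, \<alpha>). (Comp C (sg 1) g, \<alpha>)) b k x))"
    by (auto simp: fun_eq_iff)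
  then show ?thesis
    using nat_trans_comp[OF rep_times_postcomp_nat_trans[OF cat sg1_in_Hom] face.iota_nat_trans]
    by simp
qed

lemma rep_delta0_nat_trans:
  "nat_trans C (rep_times C (so 0) (n - 1)) (rep_times C (so 0) n) rep_delta0"
  unfolding nat_trans_def by (auto simp: delta0_comp_Delta[OF _ n_pos] delta0_comp_dcomp)

lemma Fsig_delta0_mem_iff:
  assumes "\<alpha> \<in> Delta k (n - 1)"
  shows "(\<alpha>, \<omega>) \<in> PSets Fsig_face b k \<longleftrightarrow> (delta0_comp k \<alpha>, \<omega>) \<in> PSets (Fsig C n so sg) b k"
  using assms delta0_comp_Delta[OF assms n_pos] by (auto simp: Fsig_mem)

lemma Fsig_delta0_nat_trans: "nat_trans C Fsig_face (Fsig C n so sg) Fsig_delta0"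
  unfolding nat_trans_def
proof (intro conjI ballI allI)
  fix b k x assume "x \<in> PSets Fsig_face b k"
  then show "Fsig_delta0 b k x \<in> PSets (Fsig C n so sg) b k"
    using Fsig_delta0_mem_iff by (cases x) (auto simp: Fsig_mem)
next
  fix b b' f k k' \<beta> and x :: "(nat \<Rightarrow> nat) \<times> 'm list" assume \<beta>: "\<beta> \<in> Delta k' k"
  obtain \<alpha> \<omega> where x_eq: "x = (\<alpha>, \<omega>)" by (cases x)
  show "Fsig_delta0 b' k' (PAct Fsig_face f k k' \<beta> x)
      = PAct (Fsig C n so sg) f k k' \<beta> (Fsig_delta0 b k x)"
    using Delta_bound[OF \<beta>, of 0]
    by (simp add: x_eq Fsig_act delta0_comp_dcomp[OF \<beta>] del: upt_Suc)
      (auto simp: Delta_bound[OF \<beta>])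
qed

lemma square_commutes:
  assumes x: "x \<in> PSets (rep_times C (so 0) (n - 1)) b k"
  shows "Fsig_delta0 b k (iota_face b k x) = iota C so sg b k (rep_delta0 b k x)"
proof -
  obtain g \<alpha> where x_eq: "x = (g, \<alpha>)" by (cases x)
  have g: "g \<in> Hom C b (so 0)" and \<alpha>: "\<alpha> \<in> Delta k (n - 1)" using x x_eq by auto
  have \<alpha>0: "Suc (\<alpha> 0) \<le> n" using Delta_bound[OF \<alpha>, of 0] n_pos by simp
  have \<sigma>1: "\<sigma> 1 (Suc (\<alpha> 0)) \<in> Hom C (so 1) (so (Suc (\<alpha> 0)))"
    using \<alpha>0 by (intro \<sigma>_in_Hom) auto
  have "\<sigma> 0 1 = sg 1"
    using comp_Id_right[OF cat sg1_in_Hom] by (simp add: chainmap.simps)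
  then have "\<sigma> 0 (Suc (\<alpha> 0)) = Comp C (\<sigma> 1 (Suc (\<alpha> 0))) (sg 1)"
    using \<sigma>_comp[of 0 1 "Suc (\<alpha> 0)"] \<alpha>0 by simp
  then have head: "Comp C (\<sigma> 0 (Suc (\<alpha> 0))) g = Comp C (\<sigma> 1 (Suc (\<alpha> 0))) (Comp C (sg 1) g)"
    using comp_assoc[OF cat g sg1_in_Hom] \<sigma>1 by simp
  then show ?thesis
    by (simp add: x_eq iota_apply del: upt_Suc) auto
qed

lemma Fsig_cover:
  assumes z: "z \<in> PSets (Fsig C n so sg) b k"
  shows "(\<exists>y \<in> PSets Fsig_face b k. z = Fsig_delta0 b k y) \<or>
         (\<exists>x \<in> PSets (rep_times C (so 0) n) b k. z = iota C so sg b k x)"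
proof -
  obtain \<alpha> \<omega> where z_eq: "z = (\<alpha>, \<omega>)" by (cases z)
  have \<alpha>: "\<alpha> \<in> Delta k n" using z z_eq by (simp add: Fsig_mem)
  show ?thesis
  proof (cases "\<alpha> 0 = 0")
    case True
    then show ?thesis using iota_vertex0_preimage z z_eq by metis
  next
    case False
    have "(delta0_pred k \<alpha>, \<omega>) \<in> PSets Fsig_face b k"
      using Fsig_delta0_mem_iff[OF delta0_pred_Delta[OF \<alpha>]] delta0_comp_pred[OF \<alpha> False] z z_eq
      by simp
    moreover have "z = Fsig_delta0 b k (delta0_pred k \<alpha>, \<omega>)"
      using delta0_comp_pred[OF \<alpha> False] z_eq by simp
    ultimately show ?thesis by blast
  qed
qed

lemma pushout_extension:
  assumes agree: "\<forall>b \<in> Ob C. \<forall>k. \<forall>x \<in> PSets (rep_times C (so 0) (n - 1)) b k.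
                    u b k (iota_face b k x) = v b k (rep_delta0 b k x)"
  shows "\<exists>w. (\<forall>b \<in> Ob C. \<forall>k. \<forall>y \<in> PSets Fsig_face b k. w b k (Fsig_delta0 b k y) = u b k y) \<and>
             (\<forall>b \<in> Ob C. \<forall>k. \<forall>x \<in> PSets (rep_times C (so 0) n) b k.
                w b k (iota C so sg b k x) = v b k x)"
proof -
  define w where
    "w = (\<lambda>b k (\<alpha>, \<omega>). if \<alpha> 0 = 0 then v b k (\<omega> ! 0, \<alpha>) else u b k (delta0_pred k \<alpha>, \<omega>))"
  have w_face: "w b k (Fsig_delta0 b k y) = u b k y" if y: "y \<in> PSets Fsig_face b k" for b k y
  proof -
    obtain \<alpha> \<omega> where y_eq: "y = (\<alpha>, \<omega>)" by (cases y)
    then have "\<alpha> \<in> Delta k (n - 1)" using y by (simp add: Fsig_mem)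
    then show ?thesis using delta0_pred_comp by (simp add: w_def y_eq)
  qed
  have w_iota: "w b k (iota C so sg b k x) = v b k x"
    if b: "b \<in> Ob C" and x: "x \<in> PSets (rep_times C (so 0) n) b k" for b k x
  proof -
    obtain g \<alpha> where x_eq: "x = (g, \<alpha>)" by (cases x)
    have g: "g \<in> Hom C b (so 0)" and \<alpha>: "\<alpha> \<in> Delta k n" using x x_eq by auto
    show ?thesis
    proof (cases "\<alpha> 0 = 0")
      case True
      then show ?thesis using comp_Id_left[OF cat g] by (simp add: w_def x_eq iota_apply)
    next
      case False
      define x' where "x' = (g, delta0_pred k \<alpha>)"
      have x': "x' \<in> PSets (rep_times C (so 0) (n - 1)) b k"
        using g delta0_pred_Delta[OF \<alpha>] by (simp add: x'_def)
      have x_x': "rep_delta0 b k x' = x"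
        using delta0_comp_pred[OF \<alpha> False] by (simp add: x'_def x_eq)
      have "w b k (iota C so sg b k x) = w b k (Fsig_delta0 b k (iota_face b k x'))"
        using square_commutes[OF x'] x_x' by simp
      also have "\<dots> = u b k (iota_face b k x')"
        using w_face nat_trans_mem[OF iota_face_nat_trans b x'] by blast
      also have "\<dots> = v b k x" using agree b x' x_x' by auto
      finally show ?thesis .
    qed
  qed
  show ?thesis using w_face w_iota by blast
qed

lemma pushout_square:
  "is_pushout TYPE('z) C (rep_times C (so 0) (n - 1)) Fsig_face (rep_times C (so 0) n)
     (Fsig C n so sg) iota_face rep_delta0 Fsig_delta0 (iota C so sg)"
  by (rule is_pushoutI_cover[OF rep_times_presheaf[OF cat] face.Fsig_presheaf
        rep_times_presheaf[OF cat] Fsig_presheaf iota_face_nat_trans rep_delta0_nat_trans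
        Fsig_delta0_nat_trans iota_nat_trans])
    (use square_commutes Fsig_cover pushout_extension in blast)+

end

theorem proposition2p3:
  fixes C :: "('o, 'm) cat" and n :: nat and so :: "nat \<Rightarrow> 'o" and sg :: "nat \<Rightarrow> 'm"
  assumes "small_category C"
    and "is_chain C n so sg"
  shows "(n = 0 \<longrightarrow> nat_iso C (rep_times C (so 0) 0) (Fsig C 0 so sg) (iota C so sg))
       \<and> (0 < n \<longrightarrow>
           is_pushout TYPE('z) C
             (rep_times C (so 0) (n - 1))
             (Fsig C (n - 1) (\<lambda>i. so (Suc i)) (\<lambda>i. sg (Suc i)))
             (rep_times C (so 0) n)
             (Fsig C n so sg)
             (\<lambda>b k (g, \<alpha>). iota C (\<lambda>i. so (Suc i)) (\<lambda>i. sg (Suc i)) b k (Comp C (sg 1) g, \<alpha>))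
             (\<lambda>b k (g, \<alpha>). (g, delta0_comp k \<alpha>))
             (\<lambda>b k (\<alpha>, \<omega>). (delta0_comp k \<alpha>, \<omega>))
             (iota C so sg))"
proof -
  interpret nerve_simplex C n so sg using assms by unfold_locales
  have "0 < n \<Longrightarrow> nerve_simplex_pos C n so sg" by unfold_locales
  then show ?thesis using iota_nat_iso_dim0 nerve_simplex_pos.pushout_square by auto
qed

end
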